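(* Let $\Sigma_n=\{x\in\mathbb R^n:x_i\ge0,\ \sum_ix_i\le1\}$, $\phi(x)=\big(\sqrt{1-\sum_{i=1}^nx_i},\sqrt{x_1},\dots,\sqrt{x_n}\big)\in\mathbb R^{n+1}$, $d_{\Sigma_n}(x,y)=2\arccos(\phi(x)\cdot\phi(y))$ and $f(x,y)=\cos(d_{\Sigma_n}(x,y)/2)=\phi(x)\cdot\phi(y)$. Then for each fixed $y\in\Sigma_n$ the function $x\mapsto f(x,y)$ is concave on $\Sigma_n$, and for each fixed $x$ the function $y\mapsto f(x,y)$ is concave on $\Sigma_n$. Consequently, for every convex polytope $\mathcal P\subset\Sigma_n$, its diameter with respect to $d_{\Sigma_n}$ equals $\max\{d_{\Sigma_n}(u,v):\ u,v\text{ vertices of }\mathcal P\}$.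
   Context: $\cdot$ denotes the Euclidean inner product in $\mathbb R^{n+1}$; $d_{\Sigma_n}$ is the Baran distance of the simplex $\Sigma_n$. *)

theory Defs
  imports "HOL-Analysis.Analysis"
begin

definition simplexS :: "(real ^ 'n) set" where
  "simplexS = {x. (\<forall>i. 0 \<le> x $ i) \<and> (\<Sum>i\<in>UNIV. x $ i) \<le> 1}"

text \<open>phi : R^n -> R^(n+1); the extra coordinate is indexed by None.\<close>
definition phiS :: "real ^ 'n \<Rightarrow> real ^ ('n option)" where
  "phiS x = (\<chi> j. case j of None \<Rightarrow> sqrt (1 - (\<Sum>i\<in>UNIV. x $ i))
                           | Some i \<Rightarrow> sqrt (x $ i))"

definition baranD :: "real ^ 'n \<Rightarrow> real ^ 'n \<Rightarrow> real" where
  "baranD x y = 2 * arccos (phiS x \<bullet> phiS y)"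

definition fS :: "real ^ 'n \<Rightarrow> real ^ 'n \<Rightarrow> real" where
  "fS x y = phiS x \<bullet> phiS y"

definition baran_diameter :: "(real ^ 'n) set \<Rightarrow> real" where
  "baran_diameter P = (SUP p\<in>P \<times> P. baranD (fst p) (snd p))"

end

theory Submission
  imports Defs
begin

text \<open>Each coordinate of \<open>\<phi>\<close> is the square root of an affine function that is nonnegative on
  the simplex, hence concave there, and \<open>\<phi>\<close> takes nonnegative values; so \<open>x \<mapsto> \<phi>(x) \<bullet> \<phi>(y)\<close>
  is a nonnegative combination of concave functions. A concave function on the convex hull of
  finitely many points is minimised at one of them; applying this in each argument separately,
  \<open>f\<close> is minimised over \<open>P \<times> P\<close> at a pair of vertices, and since \<open>arccos\<close> is decreasing,
  \<open>d\<^sub>\<Sigma> = 2 arccos f\<close> is maximised there.\<close>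

lemma concave_on_real_sqrt: "concave_on {0..} sqrt"
  unfolding concave_on_iff
proof (intro conjI convex_real_interval ballI allI impI)
  fix a b u v :: real
  assume ab: "a \<in> {0..}" "b \<in> {0..}" and uv: "0 \<le> u" "0 \<le> v" "u + v = 1"
  have "(u * sqrt a + v * sqrt b)\<^sup>2 \<le> u * (sqrt a)\<^sup>2 + v * (sqrt b)\<^sup>2"
    using convex_power2 uv unfolding convex_on_def by fastforce
  also have "\<dots> = u * a + v * b"
    using ab by simp
  finally have "u * sqrt a + v * sqrt b \<le> sqrt (u * a + v * b)"
    using real_le_rsqrt by blast
  then show "u * sqrt a + v * sqrt b \<le> sqrt (u *\<^sub>R a + v *\<^sub>R b)"
    by simp
qed

lemma concave_on_compose_affine:
  fixes g :: "'b::real_vector \<Rightarrow> real" and l :: "'a::real_vector \<Rightarrow> 'b"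
  assumes g: "concave_on T g" and l: "linear l" and S: "convex S"
    and maps: "\<And>x. x \<in> S \<Longrightarrow> c + l x \<in> T"
  shows "concave_on S (\<lambda>x. g (c + l x))"
  unfolding concave_on_iff
proof (intro conjI S ballI allI impI)
  fix x y :: 'a and u v :: real
  assume xy: "x \<in> S" "y \<in> S" and uv: "0 \<le> u" "0 \<le> v" "u + v = 1"
  have "c + l (u *\<^sub>R x + v *\<^sub>R y) = u *\<^sub>R (c + l x) + v *\<^sub>R (c + l y)"
    using uv by (simp add: linear_add[OF l] linear_scale[OF l] algebra_simps flip: scaleR_add_left)
  then show "u * g (c + l x) + v * g (c + l y) \<le> g (c + l (u *\<^sub>R x + v *\<^sub>R y))"
    using g maps xy uv unfolding concave_on_iff by simp
qed

lemma concave_on_sum_fun: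
  assumes "finite I" "convex S" "\<And>i. i \<in> I \<Longrightarrow> concave_on S (f i)"
  shows "concave_on S (\<lambda>x. \<Sum>i\<in>I. f i x)"
  using assms by (induction I rule: finite_induct) (auto intro: concave_on_add simp: concave_on_const)

lemma concave_on_inner_nonneg:
  fixes \<Phi> :: "'a::real_vector \<Rightarrow> real ^ 'm"
  assumes "convex S" "\<And>j. concave_on S (\<lambda>x. \<Phi> x $ j)" "\<And>j. 0 \<le> w $ j"
  shows "concave_on S (\<lambda>x. \<Phi> x \<bullet> w)"
  unfolding inner_vec_def
  using assms by (intro concave_on_sum_fun) (auto simp: mult.commute[of "\<Phi> _ $ _"])

lemma concave_on_convex_hull_min:
  fixes g :: "'a::real_vector \<Rightarrow> real"
  assumes g: "concave_on (convex hull E) g" and E: "finite E" "E \<noteq> {}"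
    and p: "p \<in> convex hull E"
  obtains b where "b \<in> E" "g b \<le> g p"
proof -
  have "Min (g ` E) \<in> g ` E"
    using E by simp
  then obtain b where b: "b \<in> E" "g b = Min (g ` E)"
    by auto
  have "\<forall>x\<in>convex hull E. - g x \<le> - g b"
    using g E b by (intro convex_on_convex_hull_bound) (auto simp: concave_on_def)
  then show thesis
    using that b p by force
qed

lemma polytope_eq_convex_hull_extreme_points:
  fixes P :: "'a::euclidean_space set"
  assumes "polytope P"
  shows "finite {x. x extreme_point_of P}" "P = convex hull {x. x extreme_point_of P}"
proof -
  obtain V where V: "finite V" "P = convex hull V"
    using assms unfolding polytope_def by auto
  then show "finite {x. x extreme_point_of P}"
    using extreme_points_of_convex_hull finite_subset by blast
  show "P = convex hull {x. x extreme_point_of P}"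
    using V Krein_Milman_polytope by blast
qed

lemma separately_concave_min_at_extreme_points:
  fixes g :: "'a::euclidean_space \<Rightarrow> 'a \<Rightarrow> real"
  assumes P: "polytope P" and uv: "u \<in> P" "v \<in> P"
    and concave_left: "\<And>y. y \<in> P \<Longrightarrow> concave_on P (\<lambda>x. g x y)"
    and concave_right: "\<And>x. x \<in> P \<Longrightarrow> concave_on P (g x)"
  obtains a b where "a extreme_point_of P" "b extreme_point_of P" "g a b \<le> g u v"
proof -
  define E where "E = {x. x extreme_point_of P}"
  have E: "finite E" "P = convex hull E"
    using polytope_eq_convex_hull_extreme_points[OF P] unfolding E_def by auto
  then have "E \<noteq> {}"
    using uv by auto
  have EP: "E \<subseteq> P"
    unfolding E_def by (auto simp: extreme_point_of_def)
  obtain b where b: "b \<in> E" "g u b \<le> g u v"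
    using concave_on_convex_hull_min[of E "g u"] concave_right[OF uv(1)] E \<open>E \<noteq> {}\<close> uv(2)
    by auto
  obtain a where a: "a \<in> E" "g a b \<le> g u b"
    using concave_on_convex_hull_min[of E "\<lambda>x. g x b"] concave_left[of b] b EP E \<open>E \<noteq> {}\<close> uv(1)
    by auto
  show thesis
    using that a b unfolding E_def by force
qed

lemma SUP_polytope_eq_Max_extreme_points:
  fixes F :: "'a::euclidean_space \<Rightarrow> 'a \<Rightarrow> real"
  assumes P: "polytope P" "P \<noteq> {}"
    and max_at_extreme: "\<And>u v. u \<in> P \<Longrightarrow> v \<in> P \<Longrightarrow>
      \<exists>a b. a extreme_point_of P \<and> b extreme_point_of P \<and> F u v \<le> F a b"
  shows "(SUP p\<in>P \<times> P. F (fst p) (snd p))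
    = Max {F u v | u v. u extreme_point_of P \<and> v extreme_point_of P}"
proof -
  define E where "E = {x. x extreme_point_of P}"
  have "finite E" "P = convex hull E"
    using polytope_eq_convex_hull_extreme_points[OF P(1)] unfolding E_def by auto
  then have E: "finite E" "E \<noteq> {}"
    using P(2) by auto
  have EP: "E \<subseteq> P"
    unfolding E_def by (auto simp: extreme_point_of_def)
  define M where "M = {F u v | u v. u extreme_point_of P \<and> v extreme_point_of P}"
  have M: "M = (\<lambda>p. F (fst p) (snd p)) ` (E \<times> E)"
    unfolding M_def E_def by force
  have "Max M \<in> M"
    using E unfolding M by simp
  moreover have "F u v \<le> Max M" if uv: "u \<in> P" "v \<in> P" for u v
  proof -
    obtain a b where "a \<in> E" "b \<in> E" "F u v \<le> F a b"
      using max_at_extreme[OF uv] unfolding E_def by auto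
    moreover have "F a b \<le> Max M"
      using \<open>a \<in> E\<close> \<open>b \<in> E\<close> E unfolding M by (intro Max_ge) force+
    ultimately show ?thesis
      by linarith
  qed
  ultimately show ?thesis
    unfolding M_def[symmetric] using EP M by (intro cSup_eq_maximum) auto
qed

lemma convex_simplexS: "convex (simplexS :: (real ^ 'n) set)"
  unfolding convex_def
proof (intro ballI allI impI)
  fix x y :: "real ^ 'n" and u v :: real
  assume "x \<in> simplexS" "y \<in> simplexS" and uv: "0 \<le> u" "0 \<le> v" "u + v = 1"
  then have x: "\<forall>i. 0 \<le> x $ i" "(\<Sum>i\<in>UNIV. x $ i) \<le> 1"
    and y: "\<forall>i. 0 \<le> y $ i" "(\<Sum>i\<in>UNIV. y $ i) \<le> 1"
    by (auto simp: simplexS_def)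
  have "(\<Sum>i\<in>UNIV. (u *\<^sub>R x + v *\<^sub>R y) $ i) = u * (\<Sum>i\<in>UNIV. x $ i) + v * (\<Sum>i\<in>UNIV. y $ i)"
    by (simp add: sum.distrib sum_distrib_left)
  also have "\<dots> \<le> u + v"
    using uv x y by (intro add_mono mult_left_le) auto
  finally show "u *\<^sub>R x + v *\<^sub>R y \<in> simplexS"
    using uv x y unfolding simplexS_def by simp
qed

lemma concave_on_phiS_component: "concave_on simplexS (\<lambda>x. phiS x $ j)"
proof (cases j)
  case None
  have "concave_on simplexS (\<lambda>x. sqrt (1 + - (\<Sum>i\<in>UNIV. x $ i)))"
    by (rule concave_on_compose_affine[OF concave_on_real_sqrt _ convex_simplexS])
      (auto intro!: linearI simp: sum.distrib sum_distrib_left simplexS_def)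
  then show ?thesis
    using None by (simp add: phiS_def)
next
  case (Some i)
  have "concave_on simplexS (\<lambda>x. sqrt (0 + x $ i))"
    by (rule concave_on_compose_affine[OF concave_on_real_sqrt _ convex_simplexS])
      (auto intro!: linearI simp: simplexS_def)
  then show ?thesis
    using Some by (simp add: phiS_def)
qed

lemma phiS_nonneg: "x \<in> simplexS \<Longrightarrow> 0 \<le> phiS x $ j"
  unfolding phiS_def simplexS_def by (cases j) auto

lemma concave_on_fS_left: "y \<in> simplexS \<Longrightarrow> concave_on simplexS (\<lambda>x. fS x y)"
  unfolding fS_def
  by (intro concave_on_inner_nonneg convex_simplexS concave_on_phiS_component phiS_nonneg)

lemma concave_on_fS_right:
  assumes "x \<in> simplexS"
  shows "concave_on simplexS (fS x)"
proof -
  have "fS x = (\<lambda>y. fS y x)"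
    by (simp add: fun_eq_iff fS_def inner_commute)
  then show ?thesis
    using concave_on_fS_left[OF assms] by simp
qed

lemma norm_phiS:
  assumes "x \<in> simplexS"
  shows "norm (phiS x) = 1"
proof -
  have "phiS x \<bullet> phiS x = (1 - (\<Sum>i\<in>UNIV. x $ i)) + (\<Sum>i\<in>UNIV. x $ i)"
    using assms
    by (simp add: inner_vec_def UNIV_option_conv sum.reindex phiS_def simplexS_def)
  then show ?thesis
    by (simp add: norm_eq_sqrt_inner)
qed

lemma abs_fS_le_1:
  assumes "x \<in> simplexS" "y \<in> simplexS"
  shows "\<bar>fS x y\<bar> \<le> 1"
  using Cauchy_Schwarz_ineq2[of "phiS x" "phiS y"] assms by (simp add: fS_def norm_phiS)

lemma baranD_antimono:
  assumes "a \<in> simplexS" "b \<in> simplexS" "u \<in> simplexS" "v \<in> simplexS"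
    and "fS a b \<le> fS u v"
  shows "baranD u v \<le> baranD a b"
  using arccos_le_arccos[of "fS a b" "fS u v"] abs_fS_le_1[of a b] abs_fS_le_1[of u v] assms
  unfolding baranD_def fS_def[symmetric] by simp

theorem mainTheorem15:
  shows "(\<forall>y\<in>(simplexS :: (real ^ 'n) set). concave_on simplexS (\<lambda>x. fS x y))
       \<and> (\<forall>x\<in>(simplexS :: (real ^ 'n) set). concave_on simplexS (\<lambda>y. fS x y))
       \<and> (\<forall>P :: (real ^ 'n) set. polytope P \<and> P \<noteq> {} \<and> P \<subseteq> simplexS \<longrightarrow>
             baran_diameter P =
               Max {baranD u v | u v. u extreme_point_of P \<and> v extreme_point_of P})"
proof (intro conjI ballI allI impI)
  fix P :: "(real ^ 'n) set"
  assume P: "polytope P \<and> P \<noteq> {} \<and> P \<subseteq> simplexS"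
  then have PS: "P \<subseteq> simplexS" and "convex P"
    by (auto simp: polytope_imp_convex)
  have concave_on_P: "concave_on P (\<lambda>x. fS x y)" "concave_on P (fS y)" if "y \<in> P" for y
    using concave_on_fS_left[of y] concave_on_fS_right[of y] that PS \<open>convex P\<close>
    by (auto simp: concave_on_def intro: convex_on_subset)
  have "\<exists>a b. a extreme_point_of P \<and> b extreme_point_of P \<and> baranD u v \<le> baranD a b"
    if uv: "u \<in> P" "v \<in> P" for u v
  proof -
    obtain a b where ab: "a extreme_point_of P" "b extreme_point_of P" "fS a b \<le> fS u v"
      by (rule separately_concave_min_at_extreme_points[of P u v fS]) (use P uv concave_on_P in auto)
    then have "a \<in> P" "b \<in> P"
      by (auto simp: extreme_point_of_def)
    then show ?thesis
      using ab baranD_antimono[of a b u v] uv PS by blast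
  qed
  then show "baran_diameter P = Max {baranD u v | u v. u extreme_point_of P \<and> v extreme_point_of P}"
    unfolding baran_diameter_def using P by (intro SUP_polytope_eq_Max_extreme_points) auto
qed (simp_all add: concave_on_fS_left concave_on_fS_right)

end
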